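(* Let $\Sigma\in\mathbb{R}^{n\times n}$ be positive semidefinite, $\Sigma_\Omega$ a best $k$-sparse approximation of $\Sigma$ and $\Sigma_{\Omega^c}=\Sigma-\Sigma_\Omega$. Let $\eta\in\mathbb{R}^{2m}$ with $\|\eta\|_1\le\epsilon_1$, $y=\mathcal A(\Sigma)+\eta$, and let $\hat\Sigma$ be any minimizer of $\min_M\|M\|_1$ subject to $M\succeq0$, $\|y-\mathcal A(M)\|_1\le\epsilon_1$. If there is an integer $K_2>2k$ with $$\frac{1-\gamma^{\mathrm{lb}}_{k+K_2}}{\sqrt2}-(1+\gamma^{\mathrm{ub}}_{K_2})\sqrt{\frac{k}{K_2}}\ge\beta_2>0,$$ then $$\|\hat\Sigma-\Sigma\|_{\mathrm F}\le\Big(\frac{C_1}{\beta_2}+C_3\Big)\frac{\|\Sigma_{\Omega^c}\|_1}{\sqrt{K_2}}+\frac{C_2}{\beta_2}\cdot\frac{\epsilon_1}{m}$$ for positive constants $C_1,C_2,C_3$ depending only on the RIP-$\ell_2/\ell_1$ constants.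
   Context: Fixed vectors $a_1,\dots,a_{2m}\in\mathbb{R}^n$; $A_i=a_ia_i^\top$; $\mathcal A(M)=(\langle A_i,M\rangle)_{i=1}^{2m}$; $B_i=A_{2i-1}-A_{2i}$; $\mathcal B(X)=(\langle B_i,X\rangle)_{i=1}^m$. $\|M\|_1$ is the entrywise $\ell_1$ norm. A best $k$-sparse approximation keeps the $k$ largest-magnitude entries. RIP-$\ell_2/\ell_1$ constants $\gamma_k^{\mathrm{lb}},\gamma_k^{\mathrm{ub}}$: the smallest numbers such that $(1-\gamma_k^{\mathrm{lb}})\|X\|_{\mathrm F}\le\frac1m\|\mathcal B(X)\|_1\le(1+\gamma_k^{\mathrm{ub}})\|X\|_{\mathrm F}$ for all symmetric $X$ with at most $k$ nonzero entries. *)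

theory Defs
  imports Complex_Main
begin

text \<open>Explicit carriers: vectors in R^n are functions nat \<Rightarrow> real (indices < n),
 n x n matrices are functions nat \<Rightarrow> nat \<Rightarrow> real (indices < n).
 The measurement vectors are a i, i = 1..2m.\<close>

definition Aop :: "nat \<Rightarrow> (nat \<Rightarrow> nat \<Rightarrow> real) \<Rightarrow> (nat \<Rightarrow> nat \<Rightarrow> real) \<Rightarrow> nat \<Rightarrow> real" where
  "Aop n a M i = (\<Sum>p<n. \<Sum>q<n. a i p * a i q * M p q)"

definition Bop :: "nat \<Rightarrow> (nat \<Rightarrow> nat \<Rightarrow> real) \<Rightarrow> (nat \<Rightarrow> nat \<Rightarrow> real) \<Rightarrow> nat \<Rightarrow> real" where
  "Bop n a X i = Aop n a X (2 * i - 1) - Aop n a X (2 * i)"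

definition Bnorm1 :: "nat \<Rightarrow> nat \<Rightarrow> (nat \<Rightarrow> nat \<Rightarrow> real) \<Rightarrow> (nat \<Rightarrow> nat \<Rightarrow> real) \<Rightarrow> real" where
  "Bnorm1 n m a X = (\<Sum>i = 1..m. \<bar>Bop n a X i\<bar>)"

definition entry_l1 :: "nat \<Rightarrow> (nat \<Rightarrow> nat \<Rightarrow> real) \<Rightarrow> real" where
  "entry_l1 n M = (\<Sum>p<n. \<Sum>q<n. \<bar>M p q\<bar>)"

definition frob :: "nat \<Rightarrow> (nat \<Rightarrow> nat \<Rightarrow> real) \<Rightarrow> real" where
  "frob n M = sqrt (\<Sum>p<n. \<Sum>q<n. (M p q)^2)"

definition symm :: "nat \<Rightarrow> (nat \<Rightarrow> nat \<Rightarrow> real) \<Rightarrow> bool" where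
  "symm n X \<longleftrightarrow> (\<forall>p<n. \<forall>q<n. X p q = X q p)"

definition psd :: "nat \<Rightarrow> (nat \<Rightarrow> nat \<Rightarrow> real) \<Rightarrow> bool" where
  "psd n M \<longleftrightarrow> symm n M \<and> (\<forall>x :: nat \<Rightarrow> real. 0 \<le> (\<Sum>p<n. \<Sum>q<n. x p * M p q * x q))"

definition nnz :: "nat \<Rightarrow> (nat \<Rightarrow> nat \<Rightarrow> real) \<Rightarrow> nat" where
  "nnz n X = card {(p, q). p < n \<and> q < n \<and> X p q \<noteq> 0}"

definition rip_lb :: "nat \<Rightarrow> nat \<Rightarrow> (nat \<Rightarrow> nat \<Rightarrow> real) \<Rightarrow> nat \<Rightarrow> real" where
  "rip_lb n m a k = Inf {g. \<forall>X. symm n X \<and> nnz n X \<le> k \<longrightarrow>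
      (1 - g) * frob n X \<le> Bnorm1 n m a X / real m}"

definition rip_ub :: "nat \<Rightarrow> nat \<Rightarrow> (nat \<Rightarrow> nat \<Rightarrow> real) \<Rightarrow> nat \<Rightarrow> real" where
  "rip_ub n m a k = Inf {g. \<forall>X. symm n X \<and> nnz n X \<le> k \<longrightarrow>
      Bnorm1 n m a X / real m \<le> (1 + g) * frob n X}"

definition best_k_sparse :: "nat \<Rightarrow> nat \<Rightarrow> (nat \<Rightarrow> nat \<Rightarrow> real) \<Rightarrow> (nat \<Rightarrow> nat \<Rightarrow> real) \<Rightarrow> bool" where
  "best_k_sparse n k S SOm \<longleftrightarrow> (\<exists>Om. Om \<subseteq> {..<n} \<times> {..<n} \<and> card Om = min k (n * n) \<and>
      (\<forall>(p, q) \<in> Om. \<forall>(p', q') \<in> ({..<n} \<times> {..<n}) - Om. \<bar>S p' q'\<bar> \<le> \<bar>S p q\<bar>) \<and>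
      (\<forall>p q. SOm p q = (if (p, q) \<in> Om then S p q else 0)))"

definition feasible :: "nat \<Rightarrow> nat \<Rightarrow> (nat \<Rightarrow> nat \<Rightarrow> real) \<Rightarrow> (nat \<Rightarrow> real) \<Rightarrow> real \<Rightarrow> (nat \<Rightarrow> nat \<Rightarrow> real) \<Rightarrow> bool" where
  "feasible n m a y eps M \<longleftrightarrow> psd n M \<and> (\<Sum>i = 1..2 * m. \<bar>y i - Aop n a M i\<bar>) \<le> eps"

end

theory Submission
  imports Defs "HOL-Analysis.L2_Norm"
begin

(* Write H = Shat - S for the recovery error.  Feasibility of the truth S gives the two basic
   facts: Shat has l1-norm at most that of S, and the difference operator B satisfies
   |B(H)|_1 <= 2 eps1.  Let Lam be the symmetric part of the support of the best k-sparse
   approximation; the l1-optimality yields the cone condition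
   |H on Lam^c|_1 <= |H on Lam|_1 + 4 |S - S_Om|_1.  The complement Lam^c is then cut into
   symmetric blocks of at most K2 entries of decreasing magnitude; every block after the first
   is controlled by the l1-mass of its predecessor (a shelling argument, lemma block_chain),
   so that H restricted to everything outside the head T (Lam plus the first block) is small in
   Frobenius norm and, via the upper RIP constant, under B.  The lower RIP constant on T and
   Cauchy-Schwarz on Lam then bound the Frobenius norm of H on T, and a final real-arithmetic
   estimate produces the theorem with C1 = 8 (1 + sup_j gamma_j^ub), C2 = 2 sqrt 2 and
   C3 = 4 sqrt 2.  The file proceeds: matrices as functions on index pairs; linearity facts;
   RIP constants; the block decomposition; the cone condition; the arithmetic; the theorem. *)

section \<open>Matrices as functions on index pairs\<close>

definition pairs :: "nat \<Rightarrow> (nat \<times> nat) set" where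
  "pairs n = {..<n} \<times> {..<n}"

definition entry :: "(nat \<Rightarrow> nat \<Rightarrow> real) \<Rightarrow> nat \<times> nat \<Rightarrow> real" where
  "entry M x = M (fst x) (snd x)"

definition restr :: "(nat \<Rightarrow> nat \<Rightarrow> real) \<Rightarrow> (nat \<times> nat) set \<Rightarrow> nat \<Rightarrow> nat \<Rightarrow> real" where
  "restr H T = (\<lambda>p q. if (p, q) \<in> T then H p q else 0)"

definition l1_on :: "(nat \<Rightarrow> nat \<Rightarrow> real) \<Rightarrow> (nat \<times> nat) set \<Rightarrow> real" where
  "l1_on H T = (\<Sum>x\<in>T. \<bar>entry H x\<bar>)"

definition sym_set :: "(nat \<times> nat) set \<Rightarrow> bool" where
  "sym_set T \<longleftrightarrow> (\<forall>p q. (p, q) \<in> T \<longrightarrow> (q, p) \<in> T)"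

lemma sym_set_pairs: "sym_set (pairs n)"
  unfolding sym_set_def pairs_def by blast

lemma sym_set_Un: "sym_set A \<Longrightarrow> sym_set B \<Longrightarrow> sym_set (A \<union> B)"
  unfolding sym_set_def by blast

lemma sym_set_Diff: "sym_set A \<Longrightarrow> sym_set B \<Longrightarrow> sym_set (A - B)"
  unfolding sym_set_def by blast

lemma finite_pairs [simp]: "finite (pairs n)"
  by (simp add: pairs_def)

lemma frob_L2: "frob n M = L2_set (entry M) (pairs n)"
  unfolding frob_def L2_set_def pairs_def entry_def by (simp add: sum.cartesian_product split_def)

lemma entry_l1_eq: "entry_l1 n M = l1_on M (pairs n)"
  unfolding entry_l1_def l1_on_def pairs_def entry_def by (simp add: sum.cartesian_product split_def)

lemma frob_nonneg: "0 \<le> frob n M"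
  by (simp add: frob_L2)

lemma l1_on_nonneg: "0 \<le> l1_on H T"
  unfolding l1_on_def by (simp add: sum_nonneg)

lemma l1_on_split:
  assumes "finite R" "T \<subseteq> R" shows "l1_on H R = l1_on H T + l1_on H (R - T)"
  unfolding l1_on_def using sum.subset_diff[OF assms(2,1), of "\<lambda>x. \<bar>entry H x\<bar>"] by linarith

lemma frob_restr:
  assumes "T \<subseteq> pairs n" shows "frob n (restr H T) = L2_set (entry H) T"
proof -
  have "frob n (restr H T) = sqrt (\<Sum>x\<in>pairs n. if x \<in> T then (entry H x)\<^sup>2 else 0)"
    unfolding frob_L2 L2_set_def
    by (intro arg_cong[where f=sqrt] sum.cong) (auto simp: entry_def restr_def)
  also have "\<dots> = sqrt (\<Sum>x\<in>pairs n \<inter> T. (entry H x)\<^sup>2)"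
    by (simp add: sum.inter_restrict)
  also have "pairs n \<inter> T = T" using assms by auto
  finally show ?thesis by (simp add: L2_set_def)
qed

lemma frob_restr_empty: "frob n (restr H {}) = 0"
  by (simp add: frob_restr L2_set_def)

lemma restr_split:
  assumes "T \<subseteq> R" shows "restr H R = (\<lambda>p q. restr H T p q + restr H (R - T) p q)"
  using assms by (auto simp: restr_def fun_eq_iff)

text \<open>Restrictions of a symmetric matrix to symmetric sets of at most K pairs are admissible
  test matrices in the definition of the K-th RIP constants.\<close>
lemma symm_restr: "symm n H \<Longrightarrow> sym_set T \<Longrightarrow> symm n (restr H T)"
  unfolding symm_def sym_set_def restr_def by metis

lemma nnz_restr:
  assumes "T \<subseteq> pairs n" shows "nnz n (restr H T) \<le> card T"
proof -
  have "{(p, q). p < n \<and> q < n \<and> restr H T p q \<noteq> 0} \<subseteq> T"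
    by (auto simp: restr_def split: if_splits)
  then show ?thesis
    unfolding nnz_def using finite_subset[OF assms finite_pairs] by (rule card_mono[rotated])
qed

lemma nnz_le_square: "nnz n X \<le> n * n"
proof -
  have "nnz n X \<le> card (pairs n)"
    unfolding nnz_def by (intro card_mono) (auto simp: pairs_def)
  then show ?thesis by (simp add: pairs_def)
qed

lemma abs_le_frob:
  assumes "p < n" "q < n" shows "\<bar>X p q\<bar> \<le> frob n X"
proof -
  have "\<bar>entry X (p, q)\<bar> \<le> L2_set (\<lambda>x. \<bar>entry X x\<bar>) (pairs n)"
    by (rule member_le_L2_set) (use assms in \<open>auto simp: pairs_def\<close>)
  then show ?thesis by (simp add: frob_L2 entry_def L2_set_def)
qed

text \<open>A is linear, so the B-norm, like the Frobenius norm, is subadditive.\<close>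

lemma frob_add: "frob n (\<lambda>p q. X p q + Y p q) \<le> frob n X + frob n Y"
  unfolding frob_L2 entry_def[abs_def] by (simp add: L2_set_triangle_ineq)

lemma Aop_add: "Aop n a (\<lambda>p q. X p q + Y p q) i = Aop n a X i + Aop n a Y i"
  unfolding Aop_def by (simp add: algebra_simps sum.distrib)

lemma Aop_diff: "Aop n a (\<lambda>p q. X p q - Y p q) i = Aop n a X i - Aop n a Y i"
  unfolding Aop_def by (simp add: algebra_simps sum_subtractf)

lemma Bnorm1_nonneg: "0 \<le> Bnorm1 n m a X"
  unfolding Bnorm1_def by (simp add: sum_nonneg)

lemma Bnorm1_add: "Bnorm1 n m a (\<lambda>p q. X p q + Y p q) \<le> Bnorm1 n m a X + Bnorm1 n m a Y"
  unfolding Bnorm1_def Bop_def Aop_add sum.distrib[symmetric] by (intro sum_mono) linarith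

lemma Bnorm1_diff: "Bnorm1 n m a (\<lambda>p q. X p q - Y p q) \<le> Bnorm1 n m a X + Bnorm1 n m a Y"
  unfolding Bnorm1_def Bop_def Aop_diff sum.distrib[symmetric] by (intro sum_mono) linarith

lemma Bnorm1_cong:
  "(\<And>p q. p < n \<Longrightarrow> q < n \<Longrightarrow> X p q = Y p q) \<Longrightarrow> Bnorm1 n m a X = Bnorm1 n m a Y"
  unfolding Bnorm1_def Bop_def Aop_def by simp

lemma restr_partition:
  assumes "T \<subseteq> pairs n"
  shows "frob n H \<le> frob n (restr H T) + frob n (restr H (pairs n - T))"
    and "Bnorm1 n m a (restr H T) \<le> Bnorm1 n m a H + Bnorm1 n m a (restr H (pairs n - T))"
proof -
  have split: "H p q = restr H T p q + restr H (pairs n - T) p q" if "p < n" "q < n" for p q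
    using that by (auto simp: restr_def pairs_def)
  have "frob n H = frob n (\<lambda>p q. restr H T p q + restr H (pairs n - T) p q)"
    unfolding frob_def using split by simp
  then show "frob n H \<le> frob n (restr H T) + frob n (restr H (pairs n - T))"
    using frob_add by simp
  have "Bnorm1 n m a (restr H T) = Bnorm1 n m a (\<lambda>p q. H p q - restr H (pairs n - T) p q)"
    by (rule Bnorm1_cong) (simp add: split)
  then show "Bnorm1 n m a (restr H T) \<le> Bnorm1 n m a H + Bnorm1 n m a (restr H (pairs n - T))"
    using Bnorm1_diff by simp
qed

text \<open>B is bounded (Lipschitz in Frobenius norm); this makes the upper RIP constants finite.\<close>
lemma Bnorm1_bounded: "\<exists>C\<ge>0. \<forall>X. Bnorm1 n m a X \<le> C * frob n X"
proof -
  define c where "c i = (\<Sum>p<n. \<Sum>q<n. \<bar>a i p * a i q\<bar>)" for i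
  have Aop_bound: "\<bar>Aop n a X i\<bar> \<le> c i * frob n X" for X i
  proof -
    have "\<bar>Aop n a X i\<bar> \<le> (\<Sum>p<n. \<Sum>q<n. \<bar>a i p * a i q\<bar> * \<bar>X p q\<bar>)"
      unfolding Aop_def abs_mult[symmetric]
      by (rule order_trans[OF sum_abs], intro sum_mono sum_abs)
    also have "\<dots> \<le> (\<Sum>p<n. \<Sum>q<n. \<bar>a i p * a i q\<bar> * frob n X)"
      by (intro sum_mono mult_left_mono abs_le_frob) auto
    finally show ?thesis by (simp add: c_def sum_distrib_right)
  qed
  define C where "C = (\<Sum>i = 1..m. c (2 * i - 1) + c (2 * i))"
  have "Bnorm1 n m a X \<le> C * frob n X" for X
  proof -
    have "Bnorm1 n m a X \<le> (\<Sum>i = 1..m. (c (2 * i - 1) + c (2 * i)) * frob n X)"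
      unfolding Bnorm1_def Bop_def
      by (intro sum_mono order_trans[OF abs_triangle_ineq4])
        (simp add: distrib_right add_mono Aop_bound)
    then show ?thesis by (simp add: C_def sum_distrib_right)
  qed
  moreover have "C \<ge> 0" unfolding C_def c_def by (intro sum_nonneg add_nonneg_nonneg) auto
  ultimately show ?thesis by blast
qed

section \<open>The RIP constants\<close>

lemma rip_lb_bound:
  assumes "symm n X" "nnz n X \<le> k"
  shows "(1 - rip_lb n m a k) * frob n X \<le> Bnorm1 n m a X / real m"
proof (cases "frob n X = 0")
  case True then show ?thesis by (simp add: Bnorm1_nonneg)
next
  case False
  then have fp: "frob n X > 0" using frob_nonneg[of n X] by simp
  define G where "G = {g. \<forall>X. symm n X \<and> nnz n X \<le> k \<longrightarrow>
      (1 - g) * frob n X \<le> Bnorm1 n m a X / real m}"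
  have "1 \<in> G" unfolding G_def by (simp add: Bnorm1_nonneg)
  have "1 - Bnorm1 n m a X / real m / frob n X \<le> Inf G"
  proof (rule cInf_greatest)
    show "G \<noteq> {}" using \<open>1 \<in> G\<close> by auto
    fix g assume "g \<in> G"
    then have "(1 - g) * frob n X \<le> Bnorm1 n m a X / real m" using assms unfolding G_def by blast
    then show "1 - Bnorm1 n m a X / real m / frob n X \<le> g"
      using fp pos_le_divide_eq[of "frob n X" "1 - g" "Bnorm1 n m a X / real m"] by linarith
  qed
  then show ?thesis unfolding rip_lb_def G_def[symmetric]
    using fp pos_le_divide_eq[of "frob n X" "1 - Inf G" "Bnorm1 n m a X / real m"] by linarith
qed

text \<open>The defining inequality of the upper RIP constant holds at the infimum; the set of
  admissible constants is nonempty because B is bounded.\<close>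
lemma rip_ub_bound:
  assumes "symm n X" "nnz n X \<le> k"
  shows "Bnorm1 n m a X / real m \<le> (1 + rip_ub n m a k) * frob n X"
proof -
  obtain C where C: "C \<ge> 0" "\<And>X. Bnorm1 n m a X \<le> C * frob n X" using Bnorm1_bounded by blast
  have Bm: "Bnorm1 n m a X / real m \<le> C * frob n X" for X
  proof (cases "m = 0")
    case False
    then have "Bnorm1 n m a X / real m \<le> Bnorm1 n m a X"
      using Bnorm1_nonneg[of n m a X] divide_left_mono[of 1 "real m" "Bnorm1 n m a X"] by simp
    then show ?thesis using C(2) order_trans by blast
  qed (use C frob_nonneg in simp)
  define G where "G = {g. \<forall>X. symm n X \<and> nnz n X \<le> k \<longrightarrow>
      Bnorm1 n m a X / real m \<le> (1 + g) * frob n X}"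
  have "C \<in> G" unfolding G_def
  proof (intro CollectI allI impI)
    fix X
    have "Bnorm1 n m a X / real m \<le> C * frob n X" by (rule Bm)
    also have "\<dots> \<le> (1 + C) * frob n X" using frob_nonneg[of n X] by (simp add: algebra_simps)
    finally show "Bnorm1 n m a X / real m \<le> (1 + C) * frob n X" .
  qed
  show ?thesis
  proof (cases "frob n X = 0")
    case True
    then show ?thesis using Bm[of X] by simp
  next
    case False
    then have fp: "frob n X > 0" using frob_nonneg[of n X] by simp
    have "Bnorm1 n m a X / real m / frob n X - 1 \<le> Inf G"
    proof (rule cInf_greatest)
      show "G \<noteq> {}" using \<open>C \<in> G\<close> by auto
      fix g assume "g \<in> G"
      then have "Bnorm1 n m a X / real m \<le> (1 + g) * frob n X" using assms unfolding G_def by blast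
      then show "Bnorm1 n m a X / real m / frob n X - 1 \<le> g"
        using fp pos_divide_le_eq[of "frob n X" "Bnorm1 n m a X / real m" "1 + g"] by linarith
    qed
    then show ?thesis unfolding rip_ub_def G_def[symmetric]
      using fp pos_divide_le_eq[of "frob n X" "Bnorm1 n m a X / real m" "1 + Inf G"] by linarith
  qed
qed

text \<open>For n > 0 the upper RIP constant is at least -1 (test it on a single nonzero entry).\<close>
lemma rip_ub_ge_minus_one:
  assumes "0 < n" "1 \<le> K" shows "0 \<le> 1 + rip_ub n m a K"
proof -
  define X :: "nat \<Rightarrow> nat \<Rightarrow> real" where "X = (\<lambda>p q. if p = 0 \<and> q = 0 then 1 else 0)"
  have "symm n X" unfolding symm_def X_def by auto
  moreover have "nnz n X \<le> card {(0::nat, 0::nat)}"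
    unfolding nnz_def X_def by (intro card_mono) (auto split: if_splits)
  ultimately have "Bnorm1 n m a X / real m \<le> (1 + rip_ub n m a K) * frob n X"
    using assms(2) by (intro rip_ub_bound) auto
  moreover have "1 \<le> frob n X" using abs_le_frob[OF assms(1) assms(1), of X] by (simp add: X_def)
  ultimately have "0 \<le> (1 + rip_ub n m a K) * frob n X"
    using Bnorm1_nonneg[of n m a X] by (meson divide_nonneg_nonneg of_nat_0_le_iff order_trans)
  then show ?thesis using \<open>1 \<le> frob n X\<close> by (simp add: zero_le_mult_iff)
qed

text \<open>A uniform bound for all upper RIP constants of a fixed operator: beyond n*n every
  matrix is admissible, so the sequence of constants is eventually constant.\<close>
definition rip_ub_sup :: "(nat \<Rightarrow> real) \<Rightarrow> real" where
  "rip_ub_sup gu = (if bdd_above (range gu) then max 0 (Sup (range gu)) else 0)"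

lemma rip_ub_sup_nonneg: "0 \<le> rip_ub_sup gu"
  unfolding rip_ub_sup_def by simp

lemma rip_ub_le_sup: "rip_ub n m a K \<le> rip_ub_sup (rip_ub n m a)"
proof -
  have stable: "rip_ub n m a j = rip_ub n m a (n * n)" if "n * n \<le> j" for j
  proof -
    have "nnz n X \<le> j \<longleftrightarrow> nnz n X \<le> n * n" for X
      using nnz_le_square[of n X] that by linarith
    then show ?thesis by (simp add: rip_ub_def)
  qed
  have "rip_ub n m a j \<in> rip_ub n m a ` {..n * n}" for j
    using stable[of j] by (cases "j \<le> n * n") auto
  then have "range (rip_ub n m a) \<subseteq> rip_ub n m a ` {..n * n}" by blast
  then have bdd: "bdd_above (range (rip_ub n m a))"
    by (meson bdd_above_finite bdd_above_mono finite_atMost finite_imageI)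
  then have "rip_ub n m a K \<le> Sup (range (rip_ub n m a))" by (intro cSup_upper) auto
  then show ?thesis unfolding rip_ub_sup_def using bdd by simp
qed

section \<open>Decomposition into blocks of decreasing magnitude\<close>

lemma card_add_pair:
  assumes "finite T" "(p, q) \<notin> T"
  shows "card T + 1 \<le> card (T \<union> {(p, q), (q, p)})" "card (T \<union> {(p, q), (q, p)}) \<le> card T + 2"
proof -
  have "card (insert (p, q) T) = card T + 1" using assms by simp
  moreover have "card (insert (p, q) T) \<le> card (T \<union> {(p, q), (q, p)})"
    using assms(1) by (intro card_mono) auto
  ultimately show "card T + 1 \<le> card (T \<union> {(p, q), (q, p)})" by simp
  have "card (insert (q, p) (insert (p, q) T)) \<le> card (insert (p, q) T) + 1"
    using assms(1) by (simp add: card_insert_if)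
  then show "card (T \<union> {(p, q), (q, p)}) \<le> card T + 2"
    using \<open>card (insert (p, q) T) = card T + 1\<close> by (simp add: insert_commute)
qed

text \<open>For a weight f invariant under transposition, a symmetric set R contains a symmetric
  set T of at most j largest entries which, unless it is all of R, has at least j - 1
  elements (pairs are added two at a time, so exactly j cannot always be reached).\<close>
lemma symmetric_top_block:
  fixes f :: "nat \<times> nat \<Rightarrow> real"
  assumes "finite R" "sym_set R" "\<And>p q. (p, q) \<in> R \<Longrightarrow> f (q, p) = f (p, q)"
  shows "\<exists>T\<subseteq>R. sym_set T \<and> card T \<le> j \<and> (T = R \<or> j \<le> card T + 1) \<and>
    (\<forall>x\<in>T. \<forall>y\<in>R - T. f y \<le> f x)"
proof (induction j)
  case 0
  show ?case by (rule exI[of _ "{}"]) (auto simp: sym_set_def)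
next
  case (Suc j)
  then obtain T where T: "T \<subseteq> R" "sym_set T" "card T \<le> j" "T = R \<or> j \<le> card T + 1"
    and top: "\<forall>x\<in>T. \<forall>y\<in>R - T. f y \<le> f x" by blast
  show ?case
  proof (cases "T = R \<or> j \<le> card T")
    case True
    then show ?thesis using T top by (intro exI[of _ T]) auto
  next
    case False
    then have "T \<noteq> R" and cT: "card T + 1 = j" using T by auto
    then have ne: "R - T \<noteq> {}" using T(1) by auto
    have fin: "finite (R - T)" using assms(1) by auto
    have "Max (f ` (R - T)) \<in> f ` (R - T)" using fin ne by (intro Max_in) auto
    then obtain x where x: "x \<in> R - T" and "f x = Max (f ` (R - T))" by auto
    then have xmax: "\<forall>y\<in>R - T. f y \<le> f x" using fin by simp
    obtain p q where pq: "x = (p, q)" by fastforce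
    have qp: "(q, p) \<in> R" "(q, p) \<notin> T"
      using x T(2) assms(2) pq unfolding sym_set_def by auto
    define T' where "T' = T \<union> {(p, q), (q, p)}"
    have finT: "finite T" using T(1) assms(1) finite_subset by blast
    have cT': "card T + 1 \<le> card T'" "card T' \<le> card T + 2"
      unfolding T'_def using card_add_pair[OF finT] x pq by auto
    have "\<forall>z\<in>T'. \<forall>y\<in>R - T'. f y \<le> f z"
      using top xmax assms(3)[of p q] x pq unfolding T'_def by auto
    moreover have "T' \<subseteq> R" "sym_set T'"
      using T(1,2) x pq qp unfolding T'_def sym_set_def by auto
    ultimately show ?thesis using cT cT' by (intro exI[of _ T']) auto
  qed
qed

lemma head_block:
  assumes K: "K \<ge> 2" and Hs: "symm n H" and R: "R \<subseteq> pairs n" "sym_set R"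
  obtains T where "T \<subseteq> R" "sym_set T" "card T \<le> K" "R \<noteq> {} \<Longrightarrow> T \<noteq> {}"
    "\<forall>y\<in>R - T. \<bar>entry H y\<bar> \<le> l1_on H T / (real K - 1)"
proof -
  have finR: "finite R" using R(1) finite_subset finite_pairs by blast
  have "\<bar>entry H (q, p)\<bar> = \<bar>entry H (p, q)\<bar>" if "(p, q) \<in> R" for p q
    using that R(1) Hs unfolding symm_def entry_def pairs_def by auto
  then obtain T where T: "T \<subseteq> R" "sym_set T" "card T \<le> K" "T = R \<or> K \<le> card T + 1"
    and top: "\<forall>x\<in>T. \<forall>y\<in>R - T. \<bar>entry H y\<bar> \<le> \<bar>entry H x\<bar>"
    using symmetric_top_block[OF finR R(2), of "\<lambda>x. \<bar>entry H x\<bar>" K] by blast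
  have "\<bar>entry H y\<bar> \<le> l1_on H T / (real K - 1)" if y: "y \<in> R - T" for y
  proof -
    have "real K - 1 \<le> real (card T)" using T(4) y by auto
    then have "(real K - 1) * \<bar>entry H y\<bar> \<le> real (card T) * \<bar>entry H y\<bar>"
      by (intro mult_right_mono) auto
    also have "\<dots> = (\<Sum>x\<in>T. \<bar>entry H y\<bar>)" by simp
    also have "\<dots> \<le> l1_on H T" unfolding l1_on_def using top y by (intro sum_mono) auto
    finally show ?thesis using K by (simp add: field_simps)
  qed
  moreover have "T \<noteq> {}" if "R \<noteq> {}" using T(4) K that by auto
  ultimately show ?thesis using that T(1-3) by blast
qed

text \<open>Arithmetic-geometric mean step used to bound the l2-norm of a block.\<close>
lemma sqrt_le_arith_mean:
  assumes "0 \<le> A" "0 \<le> l" "0 \<le> s" "s \<le> A * l / d" "d > 0"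
  shows "sqrt s \<le> (A + l) / (2 * sqrt d)"
proof -
  have "A * l \<le> ((A + l) / 2)\<^sup>2"
    using zero_le_power2[of "(A - l) / 2"] by (simp add: power2_eq_square field_simps)
  then have "s \<le> ((A + l) / 2)\<^sup>2 / d" using assms(4,5) divide_right_mono[of "A * l" _ d] by force
  also have "\<dots> = ((A + l) / (2 * sqrt d))\<^sup>2" using assms by (simp add: power_divide power_mult_distrib)
  finally show ?thesis using assms by (metis real_sqrt_abs real_sqrt_le_mono abs_of_nonneg
      divide_nonneg_pos add_nonneg_nonneg mult_pos_pos real_sqrt_gt_zero zero_less_numeral)
qed

lemma frob_block_bound:
  assumes "T \<subseteq> pairs n" "0 \<le> A" "d > 0" "\<forall>x\<in>T. \<bar>entry H x\<bar> \<le> A / d"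
  shows "frob n (restr H T) \<le> (A + l1_on H T) / (2 * sqrt d)"
proof -
  have "(\<Sum>x\<in>T. (entry H x)\<^sup>2) \<le> (\<Sum>x\<in>T. A / d * \<bar>entry H x\<bar>)"
  proof (intro sum_mono)
    fix x assume "x \<in> T"
    then have "\<bar>entry H x\<bar> * \<bar>entry H x\<bar> \<le> A / d * \<bar>entry H x\<bar>"
      using assms(4) by (intro mult_right_mono) auto
    then show "(entry H x)\<^sup>2 \<le> A / d * \<bar>entry H x\<bar>" by (simp add: power2_eq_square)
  qed
  also have "\<dots> = A * l1_on H T / d" unfolding l1_on_def by (simp add: sum_distrib_left sum_divide_distrib)
  finally show ?thesis unfolding frob_restr[OF assms(1)] L2_set_def
    by (intro sqrt_le_arith_mean) (use assms l1_on_nonneg in \<open>auto intro: sum_nonneg\<close>)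
qed

text \<open>If all entries
  of H on the symmetric set R are at most A / (K - 1), then peeling off head blocks one after
  the other (each block's entries are bounded by the average of its predecessor) gives
  phi (H on R) <= c (A/2 + |H on R|_1) / sqrt (K - 1).\<close>
lemma block_chain:
  fixes \<phi> :: "(nat \<Rightarrow> nat \<Rightarrow> real) \<Rightarrow> real"
  assumes K: "K \<ge> 2" and Hs: "symm n H" and c: "0 \<le> c"
    and subadd: "\<And>X Y. \<phi> (\<lambda>p q. X p q + Y p q) \<le> \<phi> X + \<phi> Y"
    and sparse: "\<And>T. T \<subseteq> pairs n \<Longrightarrow> sym_set T \<Longrightarrow> card T \<le> K \<Longrightarrow>
      \<phi> (restr H T) \<le> c * frob n (restr H T)"
  shows "R \<subseteq> pairs n \<Longrightarrow> sym_set R \<Longrightarrow> 0 \<le> A \<Longrightarrow> \<forall>x\<in>R. \<bar>entry H x\<bar> \<le> A / (real K - 1) \<Longrightarrow>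
    \<phi> (restr H R) \<le> c * ((A / 2 + l1_on H R) / sqrt (real K - 1))"
proof (induction "card R" arbitrary: R A rule: less_induct)
  case less
  note R = less.prems
  define D where "D = sqrt (real K - 1)"
  have D: "D > 0" unfolding D_def using K by simp
  obtain T where T: "T \<subseteq> R" "sym_set T" "card T \<le> K" "R \<noteq> {} \<Longrightarrow> T \<noteq> {}"
    and small: "\<forall>y\<in>R - T. \<bar>entry H y\<bar> \<le> l1_on H T / (real K - 1)"
    using head_block[OF K Hs R(1,2)] by blast
  have TI: "T \<subseteq> pairs n" using T(1) R(1) by auto
  define l where "l = l1_on H T"
  have l0: "0 \<le> l" unfolding l_def by (rule l1_on_nonneg)
  have "frob n (restr H T) \<le> (A + l) / (2 * D)"
    unfolding l_def D_def using R(3,4) T(1) K by (intro frob_block_bound[OF TI]) auto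
  then have head: "\<phi> (restr H T) \<le> c * ((A + l) / (2 * D))"
    using sparse[OF TI T(2,3)] c by (meson mult_left_mono order_trans)
  have tail: "\<phi> (restr H (R - T)) \<le> c * ((l / 2 + l1_on H (R - T)) / D)"
  proof (cases "R = {}")
    case True
    then have "\<phi> (restr H (R - T)) \<le> 0" using sparse[of "{}"] by (simp add: frob_restr_empty sym_set_def)
    also have "0 \<le> c * ((l / 2 + l1_on H (R - T)) / D)" using c l0 D l1_on_nonneg by simp
    finally show ?thesis .
  next
    case False
    have finR: "finite R" using R(1) finite_subset finite_pairs by blast
    have "R - T \<subset> R" using T(1,4) False by blast
    then have smaller: "card (R - T) < card R" using finR by (rule psubset_card_mono[rotated])
    have "R - T \<subseteq> pairs n" "sym_set (R - T)"
      using R(1) sym_set_Diff[OF R(2) T(2)] by auto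
    from less.hyps[OF smaller this l0] show ?thesis using small unfolding l_def D_def by simp
  qed
  have "l1_on H R = l + l1_on H (R - T)"
    unfolding l_def by (rule l1_on_split[OF finite_subset[OF R(1) finite_pairs] T(1)])
  then have eq: "(A + l) / (2 * D) + (l / 2 + l1_on H (R - T)) / D = (A / 2 + l1_on H R) / D"
    using D by (simp add: field_simps)
  have "\<phi> (restr H R) \<le> \<phi> (restr H T) + \<phi> (restr H (R - T))"
    unfolding restr_split[OF T(1), of H] by (rule subadd)
  also have "\<dots> \<le> c * ((A + l) / (2 * D) + (l / 2 + l1_on H (R - T)) / D)"
    using head tail by (simp add: distrib_left)
  finally have "\<phi> (restr H R) \<le> c * ((A / 2 + l1_on H R) / D)" unfolding eq .
  then show ?case unfolding D_def .
qed

lemma tail_bound: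
  fixes \<phi> :: "(nat \<Rightarrow> nat \<Rightarrow> real) \<Rightarrow> real"
  assumes K: "K \<ge> 2" and Hs: "symm n H" and c: "0 \<le> c"
    and subadd: "\<And>X Y. \<phi> (\<lambda>p q. X p q + Y p q) \<le> \<phi> X + \<phi> Y"
    and sparse: "\<And>T. T \<subseteq> pairs n \<Longrightarrow> sym_set T \<Longrightarrow> card T \<le> K \<Longrightarrow>
      \<phi> (restr H T) \<le> c * frob n (restr H T)"
    and R: "R \<subseteq> pairs n" "sym_set R" and T: "T \<subseteq> R" "sym_set T"
    and small: "\<forall>y\<in>R - T. \<bar>entry H y\<bar> \<le> l1_on H T / (real K - 1)"
  shows "\<phi> (restr H (R - T)) \<le> c * (l1_on H R / sqrt (real K - 1))"
proof -
  have "R - T \<subseteq> pairs n" using R(1) by auto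
  from block_chain[OF K Hs c subadd sparse this sym_set_Diff[OF R(2) T(2)] l1_on_nonneg small]
  have "\<phi> (restr H (R - T)) \<le> c * ((l1_on H T / 2 + l1_on H (R - T)) / sqrt (real K - 1))" .
  also have "\<dots> \<le> c * (l1_on H R / sqrt (real K - 1))"
  proof -
    have "l1_on H T / 2 + l1_on H (R - T) \<le> l1_on H R"
      using l1_on_split[OF finite_subset[OF R(1) finite_pairs] T(1), of H] l1_on_nonneg[of H T]
      by linarith
    then show ?thesis using c K by (intro mult_left_mono divide_right_mono) simp_all
  qed
  finally show ?thesis .
qed

lemma sparse_decomposition:
  assumes K: "K \<ge> 2" and Hs: "symm n H" and Lam: "Lam \<subseteq> pairs n" "sym_set Lam"
    and gu: "0 \<le> 1 + rip_ub n m a K"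
  obtains T where "Lam \<subseteq> T" "T \<subseteq> pairs n" "sym_set T" "card T \<le> card Lam + K"
    "frob n (restr H (pairs n - T)) \<le> l1_on H (pairs n - Lam) / sqrt (real K - 1)"
    "Bnorm1 n m a (restr H (pairs n - T)) / real m
       \<le> (1 + rip_ub n m a K) * (l1_on H (pairs n - Lam) / sqrt (real K - 1))"
proof -
  define R where "R = pairs n - Lam"
  have R: "R \<subseteq> pairs n" "sym_set R"
    unfolding R_def using sym_set_Diff[OF sym_set_pairs Lam(2)] by auto
  obtain T1 where T1: "T1 \<subseteq> R" "sym_set T1" "card T1 \<le> K"
    and small: "\<forall>y\<in>R - T1. \<bar>entry H y\<bar> \<le> l1_on H T1 / (real K - 1)"
    by (meson head_block[OF K Hs R])
  define T where "T = Lam \<union> T1"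
  have rest: "pairs n - T = R - T1" unfolding T_def R_def by auto
  have "frob n (restr H (R - T1)) \<le> 1 * (l1_on H R / sqrt (real K - 1))"
    by (rule tail_bound[OF K Hs _ frob_add _ R T1(1,2) small]) auto
  moreover have "Bnorm1 n m a (restr H (R - T1)) / real m
      \<le> (1 + rip_ub n m a K) * (l1_on H R / sqrt (real K - 1))"
  proof (rule tail_bound[OF K Hs gu _ _ R T1(1,2) small])
    show "Bnorm1 n m a (\<lambda>p q. X p q + Y p q) / real m \<le> Bnorm1 n m a X / real m + Bnorm1 n m a Y / real m"
      for X Y using divide_right_mono[OF Bnorm1_add, of "real m"] by (simp add: add_divide_distrib)
    show "Bnorm1 n m a (restr H S) / real m \<le> (1 + rip_ub n m a K) * frob n (restr H S)"
      if "S \<subseteq> pairs n" "sym_set S" "card S \<le> K" for S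
      using rip_ub_bound[OF symm_restr[OF Hs that(2)]] nnz_restr[OF that(1), of H] that(3) by simp
  qed
  moreover have "Lam \<subseteq> T" "T \<subseteq> pairs n" "sym_set T"
    using Lam T1 R sym_set_Un unfolding T_def by auto
  moreover have "card T \<le> card Lam + K" using card_Un_le[of Lam T1] T1(3) unfolding T_def by linarith
  ultimately show ?thesis using that[of T] unfolding rest R_def[symmetric] by simp
qed

text \<open>Cauchy-Schwarz: the l1-mass of H on Lam is at most sqrt (card Lam) times the
  Frobenius norm of H on any T containing Lam.\<close>
lemma l1_on_le_sqrt_card:
  assumes "Lam \<subseteq> T" "T \<subseteq> pairs n"
  shows "l1_on H Lam \<le> sqrt (real (card Lam)) * frob n (restr H T)"
proof -
  have "l1_on H Lam = (\<Sum>x\<in>Lam. \<bar>entry H x\<bar> * \<bar>1\<bar>)" unfolding l1_on_def by simp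
  also have "\<dots> \<le> L2_set (entry H) Lam * L2_set (\<lambda>_. 1) Lam" by (rule L2_set_mult_ineq)
  also have "\<dots> \<le> L2_set (entry H) T * sqrt (real (card Lam))"
  proof -
    have "(\<Sum>x\<in>Lam. (entry H x)\<^sup>2) \<le> (\<Sum>x\<in>T. (entry H x)\<^sup>2)"
      using assms finite_subset[OF assms(2) finite_pairs] by (intro sum_mono2) auto
    then have "L2_set (entry H) Lam \<le> L2_set (entry H) T"
      unfolding L2_set_def by (rule real_sqrt_le_mono)
    from mult_right_mono[OF this, of "sqrt (real (card Lam))"] show ?thesis
      by (simp add: L2_set_constant)
  qed
  finally show ?thesis using frob_restr[OF assms(2)] by (simp add: mult.commute)
qed

section \<open>The cone condition\<close>

definition sym_core :: "(nat \<times> nat) set \<Rightarrow> (nat \<times> nat) set" where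
  "sym_core Om = {x\<in>Om. prod.swap x \<in> Om}"

lemma sym_core_subset: "sym_core Om \<subseteq> Om"
  unfolding sym_core_def by auto

lemma sym_set_sym_core: "sym_set (sym_core Om)"
  unfolding sym_set_def sym_core_def by auto

text \<open>For symmetric S, passing from Om to its symmetric part at most doubles the l1-mass of
  S outside: every dropped pair is the transpose of a pair outside Om.\<close>
lemma sym_core_tail:
  assumes Om: "Om \<subseteq> pairs n" and S: "symm n S"
  shows "l1_on S (pairs n - sym_core Om) \<le> 2 * l1_on S (pairs n - Om)"
proof -
  define U where "U = Om - sym_core Om"
  have finU: "finite U" unfolding U_def using finite_subset[OF Om finite_pairs] by simp
  have dec: "pairs n - sym_core Om = (pairs n - Om) \<union> U"
    unfolding U_def using Om sym_core_subset by auto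
  have "l1_on S (pairs n - sym_core Om) = l1_on S (pairs n - Om) + l1_on S U"
    unfolding dec l1_on_def by (rule sum.union_disjoint) (use finU in \<open>auto simp: U_def\<close>)
  moreover have "l1_on S U \<le> l1_on S (pairs n - Om)"
  proof -
    have swap_eq: "entry S (prod.swap x) = entry S x" if "x \<in> U" for x
      using that Om S unfolding U_def sym_core_def symm_def entry_def pairs_def by auto
    have "l1_on S U = (\<Sum>x\<in>prod.swap ` U. \<bar>entry S x\<bar>)"
      unfolding l1_on_def by (subst sum.reindex) (auto simp: inj_on_def swap_eq)
    also have "\<dots> \<le> l1_on S (pairs n - Om)"
      unfolding l1_on_def using Om
      by (intro sum_mono2) (auto simp: U_def sym_core_def pairs_def)
    finally show ?thesis .
  qed
  ultimately show ?thesis by linarith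
qed

lemma cone_condition:
  assumes "l1_on Shat (pairs n) \<le> l1_on S (pairs n)" "L \<subseteq> pairs n"
  shows "l1_on (\<lambda>p q. Shat p q - S p q) (pairs n - L)
    \<le> l1_on (\<lambda>p q. Shat p q - S p q) L + 2 * l1_on S (pairs n - L)"
proof -
  let ?H = "\<lambda>p q. Shat p q - S p q"
  have on_L: "l1_on S L - l1_on ?H L \<le> l1_on Shat L"
    unfolding l1_on_def sum_subtractf[symmetric]
    by (intro sum_mono) (unfold entry_def, arith)
  have off_L: "l1_on ?H (pairs n - L) - l1_on S (pairs n - L) \<le> l1_on Shat (pairs n - L)"
    unfolding l1_on_def sum_subtractf[symmetric]
    by (intro sum_mono) (unfold entry_def, arith)
  show ?thesis
    using l1_on_split[OF finite_pairs assms(2), of Shat] l1_on_split[OF finite_pairs assms(2), of S]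
      on_L off_L assms(1) by linarith
qed

lemma sum_consecutive_pairs:
  fixes g :: "nat \<Rightarrow> real"
  shows "(\<Sum>i = 1..m. g (2 * i - 1) + g (2 * i)) = (\<Sum>j = 1..2 * m. g j)"
proof (induction m)
  case (Suc m)
  have "2 * Suc m = Suc (Suc (2 * m))" by simp
  then show ?case using Suc by (simp add: sum.cl_ivl_Suc)
qed simp

lemma Bnorm1_error_bound:
  assumes "(\<Sum>i = 1..2 * m. \<bar>y i - Aop n a S i\<bar>) \<le> eps"
    and "(\<Sum>i = 1..2 * m. \<bar>y i - Aop n a Shat i\<bar>) \<le> eps"
  shows "Bnorm1 n m a (\<lambda>p q. Shat p q - S p q) \<le> 2 * eps"
proof -
  let ?H = "\<lambda>p q. Shat p q - S p q"
  have "Bnorm1 n m a ?H \<le> (\<Sum>i = 1..m. \<bar>Aop n a ?H (2 * i - 1)\<bar> + \<bar>Aop n a ?H (2 * i)\<bar>)"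
    unfolding Bnorm1_def Bop_def by (intro sum_mono abs_triangle_ineq4)
  also have "\<dots> = (\<Sum>j = 1..2 * m. \<bar>Aop n a ?H j\<bar>)" by (rule sum_consecutive_pairs)
  also have "\<dots> \<le> (\<Sum>j = 1..2 * m. \<bar>y j - Aop n a S j\<bar> + \<bar>y j - Aop n a Shat j\<bar>)"
    unfolding Aop_diff by (intro sum_mono) linarith
  also have "\<dots> \<le> 2 * eps" using assms by (simp add: sum.distrib)
  finally show ?thesis .
qed

lemma frob_error_le_l1:
  assumes "entry_l1 n Shat \<le> entry_l1 n S"
  shows "frob n (\<lambda>p q. Shat p q - S p q) \<le> 2 * entry_l1 n S"
proof -
  have "frob n (\<lambda>p q. Shat p q - S p q) \<le> entry_l1 n (\<lambda>p q. Shat p q - S p q)"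
    unfolding frob_L2 entry_l1_eq l1_on_def by (rule L2_set_le_sum_abs)
  also have "\<dots> \<le> entry_l1 n Shat + entry_l1 n S"
    unfolding entry_l1_def by (simp add: sum.distrib[symmetric] sum_mono abs_triangle_ineq4)
  finally show ?thesis using assms by simp
qed

lemma inv_sqrt_pred_le:
  fixes K :: real assumes "2 \<le> K" shows "1 / sqrt (K - 1) \<le> sqrt 2 / sqrt K"
proof -
  have "sqrt K \<le> sqrt (2 * (K - 1))" using assms by (intro real_sqrt_le_mono) simp
  then have "sqrt K \<le> sqrt 2 * sqrt (K - 1)" by (metis real_sqrt_mult)
  then show ?thesis using assms by (simp add: divide_simps)
qed

text \<open>Solving the RIP inequality on the head block for its Frobenius norm F0, using the
  cone condition L <= sqrt k F0 + 4 t for the l1-mass L of the rest, u = 1/sqrt (K-1).\<close>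
lemma head_energy_bound:
  fixes F0 E L t k K gl gu b u :: real
  assumes rip: "(1 - gl) * F0 \<le> E + (1 + gu) * (L * u)"
    and cone: "L \<le> sqrt k * F0 + 4 * t"
    and cond: "b \<le> (1 - gl) / sqrt 2 - (1 + gu) * sqrt (k / K)"
    and u: "0 \<le> u" "u \<le> sqrt 2 / sqrt K"
    and nonneg: "0 \<le> 1 + gu" "0 \<le> F0" "0 \<le> k"
  shows "sqrt 2 * b * F0 \<le> E + 4 * (1 + gu) * t * u"
proof -
  have "sqrt k * u \<le> sqrt k * (sqrt 2 / sqrt K)" using u(2) nonneg(3) by (intro mult_left_mono) auto
  also have "\<dots> = sqrt 2 * sqrt (k / K)" by (simp add: real_sqrt_divide)
  finally have "sqrt k * u \<le> sqrt 2 * sqrt (k / K)" .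
  then have "(1 + gu) * (sqrt k * u) * F0 \<le> (1 + gu) * (sqrt 2 * sqrt (k / K)) * F0"
    using nonneg by (intro mult_right_mono mult_left_mono) auto
  also have "\<dots> \<le> ((1 - gl) - sqrt 2 * b) * F0"
  proof (intro mult_right_mono)
    have "sqrt 2 * b \<le> sqrt 2 * ((1 - gl) / sqrt 2 - (1 + gu) * sqrt (k / K))"
      using cond by (intro mult_left_mono) auto
    also have "\<dots> = (1 - gl) - (1 + gu) * (sqrt 2 * sqrt (k / K))"
      by (simp add: field_simps)
    finally show "(1 + gu) * (sqrt 2 * sqrt (k / K)) \<le> 1 - gl - sqrt 2 * b" by simp
  qed (use nonneg in auto)
  finally have main: "(1 + gu) * (sqrt k * u) * F0 \<le> ((1 - gl) - sqrt 2 * b) * F0" .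
  have "(1 + gu) * (L * u) \<le> (1 + gu) * ((sqrt k * F0 + 4 * t) * u)"
    using cone u(1) nonneg(1) by (intro mult_left_mono mult_right_mono) auto
  then show ?thesis using rip main by (simp add: algebra_simps)
qed

text \<open>Collecting terms: with w = 1/sqrt K and u <= sqrt 2 w, the total error is bounded by
  the claimed combination of the tail t and the noise level e.\<close>
lemma final_estimate:
  fixes fH F0 E t u w gu G b e :: real
  assumes head: "sqrt 2 * b * F0 \<le> E + 4 * (1 + gu) * t * u"
    and total: "fH \<le> 2 * F0 + 4 * t * u"
    and E: "E \<le> 2 * e" and u: "0 \<le> u" "u \<le> sqrt 2 * w"
    and gu: "0 \<le> 1 + gu" "gu \<le> G" and b: "0 < b" and t: "0 \<le> t"
  shows "fH \<le> (8 * (1 + G) / b + 4 * sqrt 2) * t * w + 2 * sqrt 2 / b * e"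
proof -
  have sqrt2_twice: "sqrt 2 * (sqrt 2 * x) = 2 * x" for x :: real
    by (simp add: mult.assoc[symmetric])
  have "(1 + gu) * (t * u) \<le> (1 + G) * (t * (sqrt 2 * w))"
    using gu t u by (intro mult_mono mult_left_mono) auto
  then have "sqrt 2 * b * F0 \<le> 2 * e + 4 * (1 + G) * t * (sqrt 2 * w)"
    using head E by (simp add: algebra_simps)
  then have "sqrt 2 * (sqrt 2 * b * F0) \<le> sqrt 2 * (2 * e + 4 * (1 + G) * t * (sqrt 2 * w))"
    by (intro mult_left_mono) auto
  moreover have "sqrt 2 * (sqrt 2 * b * F0) = 2 * F0 * b"
    and "sqrt 2 * (2 * e + 4 * (1 + G) * t * (sqrt 2 * w)) = 2 * sqrt 2 * e + 8 * (1 + G) * t * w"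
    by (simp_all add: algebra_simps sqrt2_twice)
  ultimately have "2 * F0 * b \<le> 2 * sqrt 2 * e + 8 * (1 + G) * t * w" by simp
  then have F0: "2 * F0 \<le> 2 * sqrt 2 / b * e + 8 * (1 + G) / b * t * w"
    using b by (simp add: field_simps)
  have "4 * t * u \<le> 4 * t * (sqrt 2 * w)" using t u by (intro mult_left_mono) auto
  then show ?thesis using total F0 by (simp add: algebra_simps)
qed

lemma cone_error_bound:
  fixes H :: "nat \<Rightarrow> nat \<Rightarrow> real"
  assumes n: "0 < n" and K: "2 \<le> K" and kK: "2 * k < K" and Hs: "symm n H"
    and Lam: "Lam \<subseteq> pairs n" "sym_set Lam" "card Lam \<le> k"
    and cone: "l1_on H (pairs n - Lam) \<le> l1_on H Lam + 4 * t"
    and meas: "Bnorm1 n m a H / real m \<le> 2 * e"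
    and cond: "(1 - rip_lb n m a (k + K)) / sqrt 2 - (1 + rip_ub n m a K) * sqrt (real k / real K) \<ge> b"
    and b: "0 < b" and t: "0 \<le> t" and G: "rip_ub n m a K \<le> G"
  shows "frob n H \<le> (8 * (1 + G) / b + 4 * sqrt 2) * t / sqrt (real K) + 2 * sqrt 2 / b * e"
proof -
  define gl gu where "gl = rip_lb n m a (k + K)" and "gu = rip_ub n m a K"
  define L u where "L = l1_on H (pairs n - Lam)" and "u = 1 / sqrt (real K - 1)"
  have gu0: "0 \<le> 1 + gu" unfolding gu_def using n K by (intro rip_ub_ge_minus_one) auto
  obtain T where T: "Lam \<subseteq> T" "T \<subseteq> pairs n" "sym_set T" "card T \<le> card Lam + K"
    and tail_frob: "frob n (restr H (pairs n - T)) \<le> L * u"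
    and tail_B: "Bnorm1 n m a (restr H (pairs n - T)) / real m \<le> (1 + gu) * (L * u)"
    using sparse_decomposition[OF K Hs Lam(1,2) gu0[unfolded gu_def]]
    unfolding L_def u_def gu_def by auto
  define F0 where "F0 = frob n (restr H T)"
  have F0_nonneg: "0 \<le> F0" unfolding F0_def by (rule frob_nonneg)
  have "(1 - gl) * F0 \<le> Bnorm1 n m a (restr H T) / real m"
    unfolding gl_def F0_def using nnz_restr[OF T(2), of H] T(4) Lam(3)
    by (intro rip_lb_bound symm_restr[OF Hs T(3)]) linarith
  also have "\<dots> \<le> Bnorm1 n m a H / real m + Bnorm1 n m a (restr H (pairs n - T)) / real m"
    using divide_right_mono[OF restr_partition(2)[OF T(2)], of "real m"] by (simp add: add_divide_distrib)
  finally have rip: "(1 - gl) * F0 \<le> Bnorm1 n m a H / real m + (1 + gu) * (L * u)"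
    using tail_B by linarith
  have "l1_on H Lam \<le> sqrt (real k) * F0"
    using l1_on_le_sqrt_card[OF T(1,2), of H] Lam(3) frob_nonneg
    unfolding F0_def by (meson mult_right_mono of_nat_le_iff real_sqrt_le_mono order_trans)
  then have L: "L \<le> sqrt (real k) * F0 + 4 * t" using cone unfolding L_def by linarith
  have u: "0 \<le> u" "u \<le> sqrt 2 / sqrt (real K)" "sqrt (real k) * u \<le> 1"
    using K kK inv_sqrt_pred_le[of "real K"] by (auto simp: u_def divide_simps)
  have head: "sqrt 2 * b * F0 \<le> Bnorm1 n m a H / real m + 4 * (1 + gu) * t * u"
    by (rule head_energy_bound[OF rip L cond[folded gl_def gu_def] u(1,2) gu0 F0_nonneg]) simp
  have "frob n H \<le> F0 + L * u" using restr_partition(1)[OF T(2), of H] tail_frob F0_def by linarith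
  also have "\<dots> \<le> 2 * F0 + 4 * t * u"
    using mult_right_mono[OF L u(1)] mult_right_mono[OF u(3) F0_nonneg] by (simp add: algebra_simps)
  finally have total: "frob n H \<le> 2 * F0 + 4 * t * u" .
  have "u \<le> sqrt 2 * (1 / sqrt (real K))" using u(2) by simp
  from final_estimate[OF head total meas u(1) this gu0 G[folded gu_def] b t]
  show ?thesis by simp
qed

lemma best_k_sparse_support:
  assumes "best_k_sparse n k S SOm"
  obtains Om where "Om \<subseteq> pairs n" "card Om \<le> k"
    "entry_l1 n (\<lambda>p q. S p q - SOm p q) = l1_on S (pairs n - Om)"
proof -
  obtain Om where Om: "Om \<subseteq> pairs n" "card Om = min k (n * n)"
    and SOm: "\<And>p q. SOm p q = (if (p, q) \<in> Om then S p q else 0)"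
    using assms unfolding best_k_sparse_def pairs_def by blast
  have "entry_l1 n (\<lambda>p q. S p q - SOm p q)
      = (\<Sum>x\<in>pairs n. if x \<in> pairs n - Om then \<bar>entry S x\<bar> else 0)"
    unfolding entry_l1_eq l1_on_def by (intro sum.cong) (auto simp: entry_def SOm)
  also have "\<dots> = (\<Sum>x\<in>pairs n \<inter> (pairs n - Om). \<bar>entry S x\<bar>)"
    by (simp add: sum.inter_restrict)
  finally show ?thesis using that Om unfolding l1_on_def by (simp add: Int_absorb1)
qed

text \<open>What the optimisation problem provides: the truth S is feasible, hence the minimiser
  has smaller l1-norm and both are close under B; the error is symmetric.\<close>
lemma feasibility_consequences:
  assumes psdS: "psd n S" and eta: "(\<Sum>i = 1..2 * m. \<bar>eta i\<bar>) \<le> eps1"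
    and y: "\<forall>i \<in> {1..2 * m}. y i = Aop n a S i + eta i"
    and fe: "feasible n m a y eps1 Shat"
    and opt: "\<forall>M. feasible n m a y eps1 M \<longrightarrow> entry_l1 n Shat \<le> entry_l1 n M"
  shows "entry_l1 n Shat \<le> entry_l1 n S" "Bnorm1 n m a (\<lambda>p q. Shat p q - S p q) \<le> 2 * eps1"
    "symm n (\<lambda>p q. Shat p q - S p q)" "0 \<le> eps1"
proof -
  have "(\<Sum>i = 1..2 * m. \<bar>y i - Aop n a S i\<bar>) = (\<Sum>i = 1..2 * m. \<bar>eta i\<bar>)"
    using y by (intro sum.cong) auto
  then have "feasible n m a y eps1 S" using psdS eta unfolding feasible_def by simp
  then show "entry_l1 n Shat \<le> entry_l1 n S" "Bnorm1 n m a (\<lambda>p q. Shat p q - S p q) \<le> 2 * eps1"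
    using opt fe Bnorm1_error_bound unfolding feasible_def by blast+
  show "symm n (\<lambda>p q. Shat p q - S p q)" using psdS fe unfolding feasible_def psd_def symm_def by auto
  have "0 \<le> (\<Sum>i = 1..2 * m. \<bar>eta i\<bar>)" by (intro sum_nonneg) simp
  then show "0 \<le> eps1" using eta by linarith
qed

text \<open>The theorem with explicit constants C1 = 8 (1 + sup_j gamma_j^ub), C2 = 2 sqrt 2,
  C3 = 4 sqrt 2.  The degenerate cases n = 0 and K2 = 1 (where k = 0) are handled directly.\<close>
lemma recovery_bound:
  assumes psdS: "psd n S" and bk: "best_k_sparse n k S SOm"
    and eta: "(\<Sum>i = 1..2 * m. \<bar>eta i\<bar>) \<le> eps1"
    and y: "\<forall>i \<in> {1..2 * m}. y i = Aop n a S i + eta i"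
    and fe: "feasible n m a y eps1 Shat"
    and opt: "\<forall>M. feasible n m a y eps1 M \<longrightarrow> entry_l1 n Shat \<le> entry_l1 n M"
    and kK: "2 * k < K2"
    and cond: "(1 - rip_lb n m a (k + K2)) / sqrt 2 - (1 + rip_ub n m a K2) * sqrt (real k / real K2) \<ge> beta2"
    and b: "0 < beta2"
  shows "frob n (\<lambda>p q. Shat p q - S p q)
    \<le> (8 * (1 + rip_ub_sup (rip_ub n m a)) / beta2 + 4 * sqrt 2)
        * entry_l1 n (\<lambda>p q. S p q - SOm p q) / sqrt (real K2)
      + 2 * sqrt 2 / beta2 * (eps1 / real m)"
    (is "frob n ?H \<le> (?C1 / beta2 + 4 * sqrt 2) * ?t / sqrt (real K2) + ?noise")
proof -
  obtain Om where Om: "Om \<subseteq> pairs n" "card Om \<le> k" and t_eq: "?t = l1_on S (pairs n - Om)"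
    using best_k_sparse_support[OF bk] by blast
  obtain l1opt: "entry_l1 n Shat \<le> entry_l1 n S" and meas: "Bnorm1 n m a ?H \<le> 2 * eps1"
    and Hs: "symm n ?H" and "0 \<le> eps1"
    using feasibility_consequences[OF psdS eta y fe opt] by blast
  then have nonneg: "0 \<le> ?t" "0 \<le> ?C1" "0 \<le> ?noise"
    using b rip_ub_sup_nonneg[of "rip_ub n m a"] by (auto simp: t_eq l1_on_nonneg)
  consider "n = 0" | "K2 = 1" | "0 < n" "2 \<le> K2" using kK by linarith
  then show ?thesis
  proof cases
    case 1
    then show ?thesis using nonneg b by (simp add: frob_def)
  next
    case 2
    then have "Om = {}" using Om kK finite_subset[OF Om(1) finite_pairs] by simp
    then have "?t = entry_l1 n S" using t_eq by (simp add: entry_l1_eq)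
    then have "frob n ?H \<le> 2 * ?t" using frob_error_le_l1[OF l1opt] by simp
    also have "\<dots> \<le> 4 * sqrt 2 * ?t"
      using nonneg(1) by (intro mult_right_mono) (simp_all add: order_trans[of 2 4 "4 * sqrt 2"])
    moreover have "(?C1 / beta2 + 4 * sqrt 2) * ?t / sqrt (real K2) = ?C1 / beta2 * ?t + 4 * sqrt 2 * ?t"
      using 2 by (simp add: distrib_right)
    moreover have "0 \<le> ?C1 / beta2 * ?t" using nonneg b by simp
    ultimately show ?thesis using nonneg(3) by linarith
  next
    case 3
    define Lam where "Lam = sym_core Om"
    have "card Lam \<le> card Om"
      unfolding Lam_def by (rule card_mono[OF finite_subset[OF Om(1) finite_pairs] sym_core_subset])
    then have Lam: "Lam \<subseteq> pairs n" "sym_set Lam" "card Lam \<le> k"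
      using Om sym_core_subset[of Om] unfolding Lam_def by (auto simp: sym_set_sym_core)
    have "l1_on ?H (pairs n - Lam) \<le> l1_on ?H Lam + 2 * l1_on S (pairs n - Lam)"
      using l1opt Lam(1) by (intro cone_condition) (simp_all add: entry_l1_eq)
    also have "l1_on S (pairs n - Lam) \<le> 2 * ?t"
      unfolding t_eq Lam_def using Om(1) psdS by (intro sym_core_tail) (simp_all add: psd_def)
    finally have cone: "l1_on ?H (pairs n - Lam) \<le> l1_on ?H Lam + 4 * ?t" by simp
    have "Bnorm1 n m a ?H / real m \<le> 2 * (eps1 / real m)"
      using divide_right_mono[OF meas, of "real m"] by simp
    from cone_error_bound[OF 3 kK Hs Lam cone this cond b nonneg(1) rip_ub_le_sup]
    show ?thesis by simp
  qed
qed

theorem lemma2: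
  "\<exists>C1 C2 C3 :: (nat \<Rightarrow> real) \<Rightarrow> (nat \<Rightarrow> real) \<Rightarrow> real.
     (\<forall>gl gu. 0 < C1 gl gu \<and> 0 < C2 gl gu \<and> 0 < C3 gl gu) \<and>
     (\<forall>(n::nat) (m::nat) (a :: nat \<Rightarrow> nat \<Rightarrow> real) (k::nat) (K2::nat)
        (S :: nat \<Rightarrow> nat \<Rightarrow> real) (SOm :: nat \<Rightarrow> nat \<Rightarrow> real)
        (eta :: nat \<Rightarrow> real) (eps1::real) (y :: nat \<Rightarrow> real)
        (Shat :: nat \<Rightarrow> nat \<Rightarrow> real) (beta2::real).
        psd n S \<and> best_k_sparse n k S SOm \<and>
        (\<Sum>i = 1..2 * m. \<bar>eta i\<bar>) \<le> eps1 \<and>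
        (\<forall>i \<in> {1..2 * m}. y i = Aop n a S i + eta i) \<and>
        feasible n m a y eps1 Shat \<and>
        (\<forall>M. feasible n m a y eps1 M \<longrightarrow> entry_l1 n Shat \<le> entry_l1 n M) \<and>
        2 * k < K2 \<and>
        (1 - rip_lb n m a (k + K2)) / sqrt 2 - (1 + rip_ub n m a K2) * sqrt (real k / real K2) \<ge> beta2 \<and>
        0 < beta2
      \<longrightarrow> frob n (\<lambda>p q. Shat p q - S p q)
          \<le> (C1 (rip_lb n m a) (rip_ub n m a) / beta2 + C3 (rip_lb n m a) (rip_ub n m a))
              * entry_l1 n (\<lambda>p q. S p q - SOm p q) / sqrt (real K2)
            + C2 (rip_lb n m a) (rip_ub n m a) / beta2 * (eps1 / real m))"
proof (rule exI[of _ "\<lambda>_ gu. 8 * (1 + rip_ub_sup gu)"], rule exI[of _ "\<lambda>_ _. 2 * sqrt 2"],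
    rule exI[of _ "\<lambda>_ _. 4 * sqrt 2"], intro conjI allI impI)
  show "0 < 8 * (1 + rip_ub_sup gu)" for gu using rip_ub_sup_nonneg[of gu] by simp
  show "0 < 2 * sqrt (2::real)" "0 < 4 * sqrt (2::real)" by simp_all
qed (elim conjE, rule recovery_bound)

end
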